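(* For all $X_1,X_3\in\{I,S,H\}$, the hybrid evaluators $X_1SX_3\mathbin{\Diamond}ISI$ and $X_1SX_3\mathbin{\Diamond}ISS$ are not one-step equivalent: there is a term (e.g. $((\lambda x.B)(x\,R))\,N$ with $R$ a redex) on which their evaluation sequences differ. In particular $HSS\mathbin{\Diamond}ISI$ and $HSS\mathbin{\Diamond}ISS$ (ahead machine), and $HSH\mathbin{\Diamond}ISI$ and $HSH\mathbin{\Diamond}ISS$ (strict normalisation), are not one-step equivalent.
   Context: Terms: $\Lambda ::= x\mid\lambda x.\Lambda\mid\Lambda\Lambda$; $[N/x]B$ is capture-avoiding substitution; a redex is a term $(\lambda x.B)N$. An evaluator is a partial function $\Lambda\rightharpoonup\Lambda$ defined by inference rules; $\mathrm{id}$ is the identity. Eval-apply template: given evaluators $la,op_1,ar_1,op_2,ar_2$ (possibly $ea$ itself), $ea$ is defined by (var) $ea(x)=x$; (abs) $ea(\lambda x.B)=\lambda x.B'$ if $la(B)=B'$; (con) $ea(MN)=B'$ if $op_1(M)=\lambda x.B$, $ar_1(N)=N'$, $ea([N'/x]B)=B'$; (neu) $ea(MN)=M''N'$ if $op_1(M)=M'$, $M'$ not an abstraction, $op_2(M')=M''$, $ar_2(N)=N'$. Premises are evaluated left to right; the evaluation sequence is the sequence of reduction steps of the whole term given by the (con) contractions (including those inside subsidiary calls) in in-order traversal of the derivation. Two evaluators are one-step equivalent iff they produce the same evaluation sequence on every term. Uniform evaluator $XYZ\in\{I,S\}^3$: $op_1=ea$, $op_2=\mathrm{id}$, and $la$,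 $ar_1$, $ar_2$ equal to $ea$ itself when the letter is $S$ and $\mathrm{id}$ when it is $I$. Hybrid evaluator $X_1X_2X_3\mathbin{\Diamond}Y_1Y_2Y_3$ ($X_i\in\{I,S,H\}$): with subsidiary $su$ the uniform evaluator $Y_1Y_2Y_3$, it is the instance $hy$ of the template with $op_1=su$, $op_2=hy$, and $la$, $ar_1$, $ar_2$ equal to $\mathrm{id}$, $su$, or $hy$ according as $X_1$, $X_2$, $X_3$ is $I$, $S$, or $H$. *)

theory Defs
  imports Main
begin

datatype dB = Var nat | App dB dB | Abs dB

fun lift :: "dB \<Rightarrow> nat \<Rightarrow> dB" where
  "lift (Var i) k = (if i < k then Var i else Var (Suc i))"
| "lift (App s t) k = App (lift s k) (lift t k)"
| "lift (Abs s) k = Abs (lift s (Suc k))"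

text \<open>Capture-avoiding substitution: subst B N k replaces index k by N.
  The redex (\<lambda>x.B) N contracts to subst B N 0, i.e. [N/x]B.\<close>
fun subst :: "dB \<Rightarrow> dB \<Rightarrow> nat \<Rightarrow> dB" where
  "subst (Var i) s k = (if k < i then Var (i - 1) else if i = k then s else Var i)"
| "subst (App t u) s k = App (subst t s k) (subst u s k)"
| "subst (Abs t) s k = Abs (subst t (lift s 0) (Suc k))"

fun is_abs :: "dB \<Rightarrow> bool" where
  "is_abs (Abs _) = True"
| "is_abs _ = False"

datatype dir = Lft | Rgt | Bod

text \<open>A reduction step of a term: the term before the step together with the position
  of the contracted redex in it.\<close>
type_synonym step = "dir list \<times> dB"

definition in_opr :: "dB \<Rightarrow> step \<Rightarrow> step" where
  "in_opr N st = (Lft # fst st, App (snd st) N)"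

definition in_opd :: "dB \<Rightarrow> step \<Rightarrow> step" where
  "in_opd M st = (Rgt # fst st, App M (snd st))"

definition in_body :: "step \<Rightarrow> step" where
  "in_body st = (Bod # fst st, Abs (snd st))"

datatype ulet = UI | US
datatype hlet = HI | HS | HH

datatype evaluator =
    Ident
  | Uni ulet ulet ulet
  | Hyb hlet hlet hlet ulet ulet ulet               \<comment> \<open>hybrid X1X2X3 \<diamond> Y1Y2Y3\<close>

fun uchoose :: "ulet \<Rightarrow> evaluator \<Rightarrow> evaluator" where
  "uchoose UI self = Ident"
| "uchoose US self = self"

fun hchoose :: "hlet \<Rightarrow> evaluator \<Rightarrow> evaluator \<Rightarrow> evaluator" where
  "hchoose HI su hy = Ident"
| "hchoose HS su hy = su"
| "hchoose HH su hy = hy"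

fun la_of :: "evaluator \<Rightarrow> evaluator" where
  "la_of Ident = Ident"
| "la_of (Uni x y z) = uchoose x (Uni x y z)"
| "la_of (Hyb x1 x2 x3 y1 y2 y3) = hchoose x1 (Uni y1 y2 y3) (Hyb x1 x2 x3 y1 y2 y3)"

fun op1_of :: "evaluator \<Rightarrow> evaluator" where
  "op1_of Ident = Ident"
| "op1_of (Uni x y z) = Uni x y z"
| "op1_of (Hyb x1 x2 x3 y1 y2 y3) = Uni y1 y2 y3"

fun ar1_of :: "evaluator \<Rightarrow> evaluator" where
  "ar1_of Ident = Ident"
| "ar1_of (Uni x y z) = uchoose y (Uni x y z)"
| "ar1_of (Hyb x1 x2 x3 y1 y2 y3) = hchoose x2 (Uni y1 y2 y3) (Hyb x1 x2 x3 y1 y2 y3)"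

fun op2_of :: "evaluator \<Rightarrow> evaluator" where
  "op2_of Ident = Ident"
| "op2_of (Uni x y z) = Ident"
| "op2_of (Hyb x1 x2 x3 y1 y2 y3) = Hyb x1 x2 x3 y1 y2 y3"

fun ar2_of :: "evaluator \<Rightarrow> evaluator" where
  "ar2_of Ident = Ident"
| "ar2_of (Uni x y z) = uchoose z (Uni x y z)"
| "ar2_of (Hyb x1 x2 x3 y1 y2 y3) = hchoose x3 (Uni y1 y2 y3) (Hyb x1 x2 x3 y1 y2 y3)"

text \<open>ev e t r ss: a (possibly partial) derivation of evaluator e on term t,
  whose contractions, in in-order traversal and recorded as steps of the term t,
  form the list ss.  r = Some t' means the derivation is complete with e(t) = t';
  r = None means the derivation was cut off, so ss is a finite prefix of the
  (possibly infinite) evaluation sequence of e on t.\<close>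
inductive ev :: "evaluator \<Rightarrow> dB \<Rightarrow> dB option \<Rightarrow> step list \<Rightarrow> bool" where
  cut: "ev e t None []"
| ident: "ev Ident t (Some t) []"
| var: "e \<noteq> Ident \<Longrightarrow> ev e (Var i) (Some (Var i)) []"
| abs: "e \<noteq> Ident \<Longrightarrow> ev (la_of e) B r ss \<Longrightarrow>
        ev e (Abs B) (map_option Abs r) (map in_body ss)"
| con: "e \<noteq> Ident \<Longrightarrow> ev (op1_of e) M (Some (Abs B)) s1 \<Longrightarrow>
        ev (ar1_of e) N (Some N') s2 \<Longrightarrow> ev e (subst B N' 0) r s3 \<Longrightarrow>
        ev e (App M N) r
          (map (in_opr N) s1 @ map (in_opd (Abs B)) s2 @ [([], App (Abs B) N')] @ s3)"
| con_part: "e \<noteq> Ident \<Longrightarrow> ev (op1_of e) M (Some (Abs B)) s1 \<Longrightarrow>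
        ev (ar1_of e) N None s2 \<Longrightarrow>
        ev e (App M N) None (map (in_opr N) s1 @ map (in_opd (Abs B)) s2)"
| op1_part: "e \<noteq> Ident \<Longrightarrow> ev (op1_of e) M None s1 \<Longrightarrow>
        ev e (App M N) None (map (in_opr N) s1)"
| neu: "e \<noteq> Ident \<Longrightarrow> ev (op1_of e) M (Some M') s1 \<Longrightarrow> \<not> is_abs M' \<Longrightarrow>
        ev (op2_of e) M' (Some M'') s2 \<Longrightarrow> ev (ar2_of e) N r s3 \<Longrightarrow>
        ev e (App M N) (map_option (App M'') r)
          (map (in_opr N) s1 @ map (in_opr N) s2 @ map (in_opd M'') s3)"
| neu_part: "e \<noteq> Ident \<Longrightarrow> ev (op1_of e) M (Some M') s1 \<Longrightarrow> \<not> is_abs M' \<Longrightarrow>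
        ev (op2_of e) M' None s2 \<Longrightarrow>
        ev e (App M N) None (map (in_opr N) s1 @ map (in_opr N) s2)"

text \<open>The evaluation sequence of e on t, represented by the set of its finite prefixes
  (this determines the possibly infinite sequence).\<close>
definition eval_seq :: "evaluator \<Rightarrow> dB \<Rightarrow> step list set" where
  "eval_seq e t = {ss. \<exists>r. ev e t r ss}"

definition one_step_equiv :: "evaluator \<Rightarrow> evaluator \<Rightarrow> bool" where
  "one_step_equiv e1 e2 \<longleftrightarrow> (\<forall>t. eval_seq e1 t = eval_seq e2 t)"

end

theory Submission
  imports Defs
begin

text \<open>Take the term ((\<lambda>x.B) (x R)) N with R a redex. Both hybrids start by running the
  subsidiary evaluator on the operator (\<lambda>x.B) (x R). ISI evaluates the operand x R of this
  redex without reducing under the neutral x, so its first contraction is the redex itself.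
  ISS does evaluate the argument R of the neutral x R, so its first contraction is R. Hence already the one-element prefixes of the two evaluation
  sequences differ.\<close>

lemma ev_Ident_no_steps:
  "ev Ident t r ss \<Longrightarrow> ss = [] \<and> (r = None \<or> r = Some t)"
  by (erule ev.cases) auto

lemma ev_Var_no_steps:
  "ev e (Var i) r ss \<Longrightarrow> ss = [] \<and> (r = None \<or> r = Some (Var i))"
  by (erule ev.cases) auto

lemma ev_Abs_no_steps_if_not_under_lambda:
  "ev (Uni UI y z) (Abs B) r ss \<Longrightarrow> ss = [] \<and> (r = None \<or> r = Some (Abs B))"
  by (erule ev.cases) (auto dest: ev_Ident_no_steps)

lemma ev_neutral_no_steps_if_not_in_neutral_args:
  "ev (Uni x y UI) (App (Var i) N) r ss \<Longrightarrow> ss = [] \<and> (r = None \<or> r = Some (App (Var i) N))"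
  by (erule ev.cases) (auto dest: ev_Var_no_steps ev_Ident_no_steps)

lemma ev_redex_of_neutral_first_step:
  assumes "ev (Uni UI y UI) (App (Abs B) (App (Var i) N)) r ss"
  shows "ss = [] \<and> r = None \<or> ss \<noteq> [] \<and> hd ss = ([], App (Abs B) (App (Var i) N))"
proof -
  have operand: "ev (uchoose y (Uni UI y UI)) (App (Var i) N) r' s \<Longrightarrow>
      s = [] \<and> (r' = None \<or> r' = Some (App (Var i) N))" for r' s
    by (cases y) (auto dest: ev_Ident_no_steps ev_neutral_no_steps_if_not_in_neutral_args)
  from assms show ?thesis
    by (cases rule: ev.cases)
       (auto dest!: operand ev_Abs_no_steps_if_not_under_lambda)
qed

lemma ev_hybrid_first_step_in_operator:
  assumes "ev (Hyb x1 x2 x3 UI y UI) (App (App (Abs B) (App (Var i) N)) P) r ss"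
  shows "ss = [] \<or> fst (hd ss) = [Lft]"
  using assms
  by (cases rule: ev.cases)
     (auto dest!: ev_redex_of_neutral_first_step simp: in_opr_def hd_map neq_Nil_conv)

lemma ev_Abs_value:
  "ev (Uni UI y z) (Abs B) (Some (Abs B)) []"
  using ev.abs[of "Uni UI y z" B "Some B" "[]"] ev.ident by simp

lemma ev_contracts_redex_of_abstractions:
  "ev (Uni UI US z) (App (Abs B) (Abs C)) None [([], App (Abs B) (Abs C))]"
  using ev.con[of "Uni UI US z" "Abs B" B "[]" "Abs C" "Abs C" "[]" None "[]"]
    ev_Abs_value ev.cut by simp

lemma ev_neutral_arg_prefix:
  assumes "ev (Uni x y US) R None [([], R)]"
  shows "ev (Uni x y US) (App (Var i) R) None [([Rgt], App (Var i) R)]"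
  using ev.neu[of "Uni x y US" "Var i" "Var i" "[]" "Var i" "[]" R None "[([], R)]"]
    ev.var[of "Uni x y US" i] ev.ident[of "Var i"] assms
  by (simp add: in_opd_def)

lemma ev_ISS_first_step_in_neutral_arg:
  "ev (Uni UI US US) (App (Abs B) (App (Var i) (App (Abs C) (Abs D)))) None
     [([Rgt, Rgt], App (Abs B) (App (Var i) (App (Abs C) (Abs D))))]"
  using ev.con_part[of "Uni UI US US" "Abs B" B "[]" "App (Var i) (App (Abs C) (Abs D))"
      "[([Rgt], App (Var i) (App (Abs C) (Abs D)))]"]
    ev_Abs_value ev_neutral_arg_prefix[OF ev_contracts_redex_of_abstractions]
  by (simp add: in_opd_def)

lemma ev_hybrid_operator_prefix:
  "ev (Hyb x1 x2 x3 y1 y2 y3) (App M P) None (map (in_opr P) ss)"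
  if "ev (Uni y1 y2 y3) M None ss"
  using ev.op1_part[of "Hyb x1 x2 x3 y1 y2 y3" M ss P] that by simp

theorem mainTheorem8:
  shows "\<forall>X1 X3. \<not> one_step_equiv (Hyb X1 HS X3 UI US UI) (Hyb X1 HS X3 UI US US)"
proof (intro allI notI)
  fix X1 X3
  define M where "M = App (Abs (Var 0)) (App (Var 0) (App (Abs (Var 0)) (Abs (Var 0))))"
  define T where "T = App M (Var 0)"
  assume "one_step_equiv (Hyb X1 HS X3 UI US UI) (Hyb X1 HS X3 UI US US)"
  then have same: "eval_seq (Hyb X1 HS X3 UI US UI) T = eval_seq (Hyb X1 HS X3 UI US US) T"
    unfolding one_step_equiv_def by blast
  have "ev (Hyb X1 HS X3 UI US US) T None [([Lft, Rgt, Rgt], T)]"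
    using ev_hybrid_operator_prefix[OF ev_ISS_first_step_in_neutral_arg]
    by (simp add: T_def M_def in_opr_def)
  then have "[([Lft, Rgt, Rgt], T)] \<in> eval_seq (Hyb X1 HS X3 UI US UI) T"
    unfolding same by (auto simp: eval_seq_def)
  then obtain r where "ev (Hyb X1 HS X3 UI US UI) T r [([Lft, Rgt, Rgt], T)]"
    unfolding eval_seq_def by blast
  then show False
    using ev_hybrid_first_step_in_operator unfolding T_def M_def by fastforce
qed

end
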